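(* There exists a constant $C>0$, depending only on $d$, such that for almost every IET $(\pi,\lambda)$ and every $n\in\mathbb N$, $$\big\|P_{\ker\Omega_{\pi^{(n)}}}\circ Z_{0,n}(\pi,\lambda)\big\|\le C.$$ Moreover, if $\pi^{(n)}=\pi$ for some $n$, then $P_{\ker\Omega_{\pi}}\circ Z_{0,n}(\pi,\lambda)=P_{\ker\Omega_{\pi}}$.
   Context: IETs $(\pi,\lambda)$ are on the alphabet $\mathcal A$ with $d\ge2$ letters. Here $\pi=(\pi_0,\pi_1)$ is irreducible and $\lambda$ is a normalized length vector. $(\pi^{(n)},\lambda^{(n)})$ denotes the $n$-th iterate under the Zorich acceleration of Rauzy–Veech induction. $Z_{0,n}(\pi,\lambda)\in SL(d,\mathbb Z)$ is the corresponding height (Zorich) cocycle product, satisfying $q^{(n)}=Z_{0,n}q^{(0)}$ for the return-time vectors. $\Omega_\pi$ is the antisymmetric matrix with - $(\Omega_\pi)_{\alpha\beta}=1$ if $\pi_1(\alpha)>\pi_1(\beta)$ and $\pi_0(\alpha)<\pi_0(\beta)$, - $(\Omega_\pi)_{\alpha\beta}=-1$ if $\pi_1(\alpha)<\pi_1(\beta)$ and $\pi_0(\alpha)>\pi_0(\beta)$, - $(\Omega_\pi)_{\alpha\beta}=0$ otherwise. $P_W$ denotes the orthogonal projection of $\mathbb R^{\mathcal A}$ onto a subspace $W$. *)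

theory Defs
  imports "HOL-Analysis.Analysis"
begin

text \<open>Interval exchange transformations on a finite alphabet 'a (d = CARD('a)).
A permutation datum is a pair (p0, p1) of bijections 'a -> {1..d}
(position of a letter in the top row, resp. bottom row).\<close>

type_synonym 'a perm_datum = "('a \<Rightarrow> nat) \<times> ('a \<Rightarrow> nat)"

definition row_ok :: "('a::finite \<Rightarrow> nat) \<Rightarrow> bool" where
  "row_ok p \<longleftrightarrow> bij_betw p UNIV {1..CARD('a)}"

definition irreducible_perm :: "'a::finite perm_datum \<Rightarrow> bool" where
  "irreducible_perm ip \<longleftrightarrow> row_ok (fst ip) \<and> row_ok (snd ip) \<and>
     (\<forall>k\<in>{1..<CARD('a)}. {a. fst ip a \<le> k} \<noteq> {a. snd ip a \<le> k})"

definition last_letter :: "('a::finite \<Rightarrow> nat) \<Rightarrow> 'a" where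
  "last_letter p = (THE a. p a = CARD('a))"

text \<open>Type of the Rauzy--Veech step: True = top type (top last interval longer).\<close>
definition rv_top :: "'a::finite perm_datum \<times> (real^'a) \<Rightarrow> bool" where
  "rv_top x = (snd x $ last_letter (fst (fst x)) > snd x $ last_letter (snd (fst x)))"

definition rv_winner :: "'a::finite perm_datum \<times> (real^'a) \<Rightarrow> 'a" where
  "rv_winner x = (if rv_top x then last_letter (fst (fst x)) else last_letter (snd (fst x)))"

definition rv_loser :: "'a::finite perm_datum \<times> (real^'a) \<Rightarrow> 'a" where
  "rv_loser x = (if rv_top x then last_letter (snd (fst x)) else last_letter (fst (fst x)))"

text \<open>Rauzy move of a row: the loser is moved right after the winner in the loser's row.\<close>
definition move_row :: "('a \<Rightarrow> nat) \<Rightarrow> 'a \<Rightarrow> 'a \<Rightarrow> ('a \<Rightarrow> nat)" where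
  "move_row p w l = (\<lambda>a. if p a \<le> p w then p a else if a = l then p w + 1 else p a + 1)"

definition normalize_len :: "real^'a::finite \<Rightarrow> real^'a" where
  "normalize_len v = (1 / (\<Sum>a\<in>UNIV. v $ a)) *\<^sub>R v"

definition rv_step :: "'a::finite perm_datum \<times> (real^'a) \<Rightarrow> 'a perm_datum \<times> (real^'a)" where
  "rv_step x =
    (let ip = fst x; v = snd x; w = rv_winner x; l = rv_loser x;
         ip' = (if rv_top x then (fst ip, move_row (snd ip) w l)
                else (move_row (fst ip) w l, snd ip));
         v' = (\<chi> b. if b = w then v $ w - v $ l else v $ b)
     in (ip', normalize_len v'))"

definition rv_iter :: "'a::finite perm_datum \<Rightarrow> real^'a \<Rightarrow> nat \<Rightarrow> 'a perm_datum \<times> (real^'a)" where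
  "rv_iter ip v n = (rv_step ^^ n) (ip, normalize_len v)"

text \<open>Rauzy--Veech height matrix of one step: q' = A q, i.e. q'_loser = q_loser + q_winner.\<close>
definition rv_matrix :: "'a::finite perm_datum \<times> (real^'a) \<Rightarrow> real^'a^'a" where
  "rv_matrix x = (\<chi> i j. (if i = j then 1 else 0) +
                         (if i = rv_loser x \<and> j = rv_winner x then 1 else 0))"

primrec rv_cocycle :: "'a::finite perm_datum \<Rightarrow> real^'a \<Rightarrow> nat \<Rightarrow> real^'a^'a" where
  "rv_cocycle ip v 0 = mat 1"
| "rv_cocycle ip v (Suc n) = rv_matrix (rv_iter ip v n) ** rv_cocycle ip v n"

text \<open>Zorich times: the k-th Zorich iterate is the n_k-th Rauzy--Veech iterate, where a
Zorich step groups a maximal block of consecutive Rauzy--Veech steps of the same type.\<close>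
primrec zorich_time :: "'a::finite perm_datum \<Rightarrow> real^'a \<Rightarrow> nat \<Rightarrow> nat" where
  "zorich_time ip v 0 = 0"
| "zorich_time ip v (Suc k) =
     (LEAST m. m > zorich_time ip v k \<and>
        rv_top (rv_iter ip v m) \<noteq> rv_top (rv_iter ip v (zorich_time ip v k)))"

definition zorich_iter :: "'a::finite perm_datum \<Rightarrow> real^'a \<Rightarrow> nat \<Rightarrow> 'a perm_datum \<times> (real^'a)" where
  "zorich_iter ip v k = rv_iter ip v (zorich_time ip v k)"

definition zorich_cocycle :: "'a::finite perm_datum \<Rightarrow> real^'a \<Rightarrow> nat \<Rightarrow> real^'a^'a" where
  "zorich_cocycle ip v k = rv_cocycle ip v (zorich_time ip v k)"

definition Omega :: "'a::finite perm_datum \<Rightarrow> real^'a^'a" where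
  "Omega ip = (\<chi> a b.
     if snd ip a > snd ip b \<and> fst ip a < fst ip b then 1
     else if snd ip a < snd ip b \<and> fst ip a > fst ip b then -1 else 0)"

definition mat_kernel :: "real^'a::finite^'a \<Rightarrow> (real^'a) set" where
  "mat_kernel M = {x. M *v x = 0}"

definition orth_proj :: "(real^'a::finite) set \<Rightarrow> real^'a \<Rightarrow> real^'a" where
  "orth_proj W x = (THE y. y \<in> W \<and> (\<forall>w\<in>W. (x - y) \<bullet> w = 0))"

end

theory Submission
  imports Defs
begin

text \<open>
  A vector lies in the kernel of \<open>\<Omega>\<^sub>\<pi>\<close> iff, for every letter, the sum of the
  entries preceding it is the same in the top and in the bottom row. A Rauzy--Veech step with
  winner \<open>w\<close> and loser \<open>l\<close> acts on row vectors by \<open>u \<mapsto> u + u\<^sub>l e\<^sub>w\<close>;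
  this sends the kernel for the new datum into the kernel for the old one and keeps the
  top-row partial sums, so \<open>k \<mapsto> k Z\<^sub>0\<^sub>,\<^sub>n\<close> maps \<open>ker \<Omega>\<^sub>\<pi>\<^sub>(\<^sub>n\<^sub>)\<close> into
  \<open>ker \<Omega>\<^sub>\<pi>\<close> with the same top-row partial sums. By irreducibility no letter is last in
  both rows, so each entry of a kernel vector is a difference of two consecutive partial sums
  in one of the rows. This bounds \<open>k Z\<close> by \<open>2 d\<^sup>3 |k|\<close> on the kernel, and by duality
  bounds \<open>P Z\<close>. If \<open>\<pi>\<^sup>(\<^sup>n\<^sup>) = \<pi>\<close>, then \<open>k Z - k\<close> is a kernel vector with vanishing
  partial sums, hence zero, so \<open>P Z = P\<close>. Nothing depends on the lengths, so both claims
  hold for every length vector.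
\<close>

lemma row_ok_iff:
  "row_ok (p::'a::finite \<Rightarrow> nat) \<longleftrightarrow> inj p \<and> (\<forall>a. 1 \<le> p a \<and> p a \<le> CARD('a))"
proof
  assume "row_ok p"
  then show "inj p \<and> (\<forall>a. 1 \<le> p a \<and> p a \<le> CARD('a))"
    unfolding row_ok_def bij_betw_def by auto
next
  assume p: "inj p \<and> (\<forall>a. 1 \<le> p a \<and> p a \<le> CARD('a))"
  then have "range p \<subseteq> {1..CARD('a)}" and "card (range p) = card {1..CARD('a)}"
    by (auto simp: card_image)
  then have "range p = {1..CARD('a)}"
    by (simp add: card_subset_eq)
  with p show "row_ok p"
    unfolding row_ok_def bij_betw_def by blast
qed

lemma row_ok_obtain:
  assumes "row_ok (p::'a::finite \<Rightarrow> nat)" "1 \<le> k" "k \<le> CARD('a)"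
  obtains a where "p a = k"
  using assms unfolding row_ok_def bij_betw_def by (metis atLeastAtMost_iff imageE)

lemma row_ok_obtain_next:
  assumes "row_ok (p::'a::finite \<Rightarrow> nat)" "p a < CARD('a)"
  obtains c where "p c = Suc (p a)"
  using assms row_ok_obtain[of p "Suc (p a)"] by auto

lemma row_ok_less_card:
  assumes "row_ok (p::'a::finite \<Rightarrow> nat)" "p l = CARD('a)" "a \<noteq> l"
  shows "p a < CARD('a)"
  using assms unfolding row_ok_iff by (metis injD le_neq_implies_less)

lemma row_ok_last_letter:
  assumes "row_ok (p::'a::finite \<Rightarrow> nat)"
  shows "p (last_letter p) = CARD('a)"
proof -
  obtain a where a: "p a = CARD('a)"
    using row_ok_obtain[OF assms, of "CARD('a)"] by auto
  moreover have "inj p"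
    using assms row_ok_iff by blast
  ultimately have "last_letter p = a"
    unfolding last_letter_def by (metis (mono_tags) injD the_equality)
  with a show ?thesis by simp
qed

lemma move_row_self:
  assumes "row_ok (q::'a::finite \<Rightarrow> nat)" "q l = CARD('a)"
  shows "move_row q l l = q"
  using assms unfolding move_row_def row_ok_iff by (auto simp: fun_eq_iff)

lemma row_ok_move_row:
  assumes q: "row_ok (q::'a::finite \<Rightarrow> nat)" and ql: "q l = CARD('a)"
  shows "row_ok (move_row q w l)"
proof (cases "w = l")
  case True
  with assms show ?thesis by (simp add: move_row_self)
next
  case False
  have inj: "inj q" and range: "\<And>a. 1 \<le> q a \<and> q a \<le> CARD('a)"
    using q row_ok_iff by blast+
  have qw: "q w < CARD('a)"
    using row_ok_less_card[OF q ql False] .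
  have "inj (move_row q w l)"
  proof (rule injI)
    fix a b
    assume "move_row q w l a = move_row q w l b"
    then have "q a = q b \<or> a = b"
      unfolding move_row_def by (simp split: if_splits)
    with inj show "a = b" by (auto dest: injD)
  qed
  moreover have "1 \<le> move_row q w l a \<and> move_row q w l a \<le> CARD('a)" for a
    using qw range[of a] row_ok_less_card[OF q ql, of a] unfolding move_row_def by auto
  ultimately show ?thesis
    unfolding row_ok_iff by blast
qed

definition prefix_sum :: "('a::finite \<Rightarrow> nat) \<Rightarrow> real^'a \<Rightarrow> 'a \<Rightarrow> real" where
  "prefix_sum p x a = (\<Sum>b | p b < p a. x $ b)"

definition prefix_sums_agree :: "'a::finite perm_datum \<Rightarrow> real^'a \<Rightarrow> bool" where
  "prefix_sums_agree ip x \<longleftrightarrow> prefix_sum (fst ip) x = prefix_sum (snd ip) x"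

lemma mem_mat_kernel_Omega_iff:
  assumes "row_ok (fst ip)" "row_ok (snd ip)"
  shows "x \<in> mat_kernel (Omega ip) \<longleftrightarrow> prefix_sums_agree ip x"
proof -
  have inj: "inj (fst ip)" "inj (snd ip)"
    using assms row_ok_iff by blast+
  have "Omega ip $ a $ b * x $ b
      = (if snd ip b < snd ip a then x $ b else 0) - (if fst ip b < fst ip a then x $ b else 0)"
    for a b
    using inj by (cases "b = a") (auto simp: Omega_def inj_eq)
  then have "(Omega ip *v x) $ a = prefix_sum (snd ip) x a - prefix_sum (fst ip) x a" for a
    by (simp add: matrix_vector_mult_def prefix_sum_def sum_subtractf sum.If_cases)
  then show ?thesis
    by (auto simp: mat_kernel_def prefix_sums_agree_def vec_eq_iff fun_eq_iff)
qed

lemma prefix_sum_add_axis: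
  "prefix_sum p (x + axis w c) a = prefix_sum p x a + (if p w < p a then c else 0)"
  unfolding prefix_sum_def axis_def by (simp add: sum.distrib)

lemma prefix_sum_diff:
  "prefix_sum p (x - y) a = prefix_sum p x a - prefix_sum p y a"
  unfolding prefix_sum_def by (simp add: sum_subtractf)

lemma prefix_sum_next:
  assumes "inj p" "p c = Suc (p a)"
  shows "prefix_sum p x c = x $ a + prefix_sum p x a"
proof -
  have "{b. p b < p c} = insert a {b. p b < p a}"
    using assms by (auto simp: less_Suc_eq inj_eq)
  then show ?thesis
    unfolding prefix_sum_def by simp
qed

lemma prefix_sum_last:
  assumes "row_ok (p::'a::finite \<Rightarrow> nat)" "p l = CARD('a)"
  shows "prefix_sum p x l = (\<Sum>b\<in>UNIV. x $ b) - x $ l"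
proof -
  have "{b. p b < p l} = UNIV - {l}"
    using assms row_ok_less_card by fastforce
  then show ?thesis
    unfolding prefix_sum_def by (simp add: sum_diff)
qed

lemma abs_prefix_sum_le: "\<bar>prefix_sum p x a\<bar> \<le> real CARD('a) * norm (x::real^'a::finite)"
proof -
  have "\<bar>prefix_sum p x a\<bar> \<le> (\<Sum>b\<in>{b. p b < p a}. \<bar>x $ b\<bar>)"
    unfolding prefix_sum_def by (rule sum_abs)
  also have "\<dots> \<le> (\<Sum>b\<in>UNIV. \<bar>x $ b\<bar>)"
    by (rule sum_mono2) auto
  also have "\<dots> \<le> (\<Sum>b\<in>(UNIV::'a set). norm x)"
    by (rule sum_mono) (simp add: component_le_norm_cart)
  finally show ?thesis by simp
qed

lemma prefix_sum_move_row:
  assumes q: "row_ok (q::'a::finite \<Rightarrow> nat)" and ql: "q l = CARD('a)" and a: "a \<noteq> l \<or> w = l"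
  shows "prefix_sum (move_row q w l) u a = prefix_sum q (u + axis w (u $ l)) a"
proof (cases "w = l")
  case True
  have "\<not> q l < q a"
    using q ql unfolding row_ok_iff by (simp add: not_less)
  with True show ?thesis
    using q ql by (simp add: move_row_self prefix_sum_add_axis)
next
  case False
  with a have "a \<noteq> l" by simp
  have lt: "q b < CARD('a)" if "b \<noteq> l" for b
    using row_ok_less_card[OF q ql that] .
  show ?thesis
  proof (cases "q a \<le> q w")
    case True
    then have "{b. move_row q w l b < move_row q w l a} = {b. q b < q a}"
      unfolding move_row_def by auto
    with True show ?thesis
      unfolding prefix_sum_def axis_def by (simp add: sum.distrib)
  next
    case beyond: False
    have "{b. move_row q w l b < move_row q w l a} = insert l {b. q b < q a}"
      using beyond \<open>a \<noteq> l\<close> unfolding move_row_def by (auto split: if_splits)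
    moreover have "l \<notin> {b. q b < q a}"
      using ql lt[OF \<open>a \<noteq> l\<close>] by simp
    ultimately show ?thesis
      using beyond unfolding prefix_sum_def axis_def by (simp add: sum.distrib)
  qed
qed

lemma prefix_sums_before_move_row:
  fixes p q :: "'a::finite \<Rightarrow> nat"
  assumes p: "row_ok p" and q: "row_ok q" and pw: "p w = CARD('a)" and ql: "q l = CARD('a)"
    and agree: "prefix_sum p u = prefix_sum (move_row q w l) u"
  shows "prefix_sum p (u + axis w (u $ l)) = prefix_sum p u"
    and "prefix_sum q (u + axis w (u $ l)) = prefix_sum p u"
proof -
  let ?q' = "move_row q w l" and ?lam = "u + axis w (u $ l)"
  have "\<not> p w < p a" for a
    using p pw unfolding row_ok_iff by (simp add: not_less)
  then show "prefix_sum p ?lam = prefix_sum p u"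
    by (simp add: fun_eq_iff prefix_sum_add_axis)
  show "prefix_sum q ?lam = prefix_sum p u"
  proof
    fix a
    show "prefix_sum q ?lam a = prefix_sum p u a"
    proof (cases "a \<noteq> l \<or> w = l")
      case True
      then show ?thesis
        using prefix_sum_move_row[OF q ql True] agree by simp
    next
      case False
      \<comment> \<open>after the move, the loser's partial sum is the winner's plus the winner's entry\<close>
      then have a: "a = l" and wl: "w \<noteq> l" by auto
      have "inj ?q'"
        using row_ok_move_row[OF q ql] row_ok_iff by blast
      moreover have "?q' l = Suc (?q' w)"
        using wl ql row_ok_less_card[OF q ql wl] unfolding move_row_def by simp
      ultimately have "prefix_sum p u l = u $ w + prefix_sum p u w"
        using agree prefix_sum_next by metis
      also have "\<dots> = (\<Sum>b\<in>UNIV. u $ b)"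
        using prefix_sum_last[OF p pw] by simp
      also have "\<dots> = prefix_sum q ?lam l"
        using prefix_sum_last[OF q ql, of ?lam] wl
        by (simp add: sum.distrib axis_def)
      finally show ?thesis
        using a by simp
    qed
  qed
qed

lemma vector_mult_rv_matrix:
  "u v* rv_matrix x = u + axis (rv_winner x) (u $ rv_loser x)"
proof -
  have "(u v* rv_matrix x) $ j = u $ j + (if j = rv_winner x then u $ rv_loser x else 0)" for j
    by (cases "j = rv_winner x")
      (simp_all add: vector_matrix_mult_def rv_matrix_def distrib_left sum.distrib
        if_distrib[of "\<lambda>t. _ * t"] cong: if_cong)
  then show ?thesis
    by (simp add: vec_eq_iff axis_def)
qed

lemma fst_rv_step:
  "fst (rv_step x) =
    (if rv_top x then (fst (fst x), move_row (snd (fst x)) (rv_winner x) (rv_loser x))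
     else (move_row (fst (fst x)) (rv_winner x) (rv_loser x), snd (fst x)))"
  by (simp add: rv_step_def Let_def)

lemma row_ok_rv_step:
  assumes "row_ok (fst (fst x))" "row_ok (snd (fst x))"
  shows "row_ok (fst (fst (rv_step x))) \<and> row_ok (snd (fst (rv_step x)))"
  using assms row_ok_move_row[OF assms(2) row_ok_last_letter[OF assms(2)]]
    row_ok_move_row[OF assms(1) row_ok_last_letter[OF assms(1)]]
  unfolding fst_rv_step rv_loser_def by auto

lemma row_ok_rv_iter:
  assumes "row_ok (fst ip)" "row_ok (snd ip)"
  shows "row_ok (fst (fst (rv_iter ip v n))) \<and> row_ok (snd (fst (rv_iter ip v n)))"
proof (induction n)
  case 0
  with assms show ?case by (simp add: rv_iter_def)
next
  case (Suc n)
  then show ?case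
    using row_ok_rv_step[of "rv_iter ip v n"] by (simp add: rv_iter_def)
qed

lemma prefix_sums_agree_rv_step:
  assumes r0: "row_ok (fst (fst x))" and r1: "row_ok (snd (fst x))"
    and agree: "prefix_sums_agree (fst (rv_step x)) u"
  shows "prefix_sums_agree (fst x) (u v* rv_matrix x)"
    and "prefix_sum (fst (fst x)) (u v* rv_matrix x) = prefix_sum (fst (fst (rv_step x))) u"
proof -
  let ?p0 = "fst (fst x)" and ?p1 = "snd (fst x)"
  have l0: "?p0 (last_letter ?p0) = CARD('a)" and l1: "?p1 (last_letter ?p1) = CARD('a)"
    using row_ok_last_letter r0 r1 by blast+
  have "prefix_sums_agree (fst x) (u v* rv_matrix x) \<and>
    prefix_sum ?p0 (u v* rv_matrix x) = prefix_sum (fst (fst (rv_step x))) u"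
  proof (cases "rv_top x")
    case True
    then have "fst (rv_step x) = (?p0, move_row ?p1 (last_letter ?p0) (last_letter ?p1))"
      and "u v* rv_matrix x = u + axis (last_letter ?p0) (u $ last_letter ?p1)"
      by (simp_all add: fst_rv_step rv_winner_def rv_loser_def vector_mult_rv_matrix)
    with prefix_sums_before_move_row[OF r0 r1 l0 l1] agree show ?thesis
      by (simp add: prefix_sums_agree_def)
  next
    case False
    then have "fst (rv_step x) = (move_row ?p0 (last_letter ?p1) (last_letter ?p0), ?p1)"
      and "u v* rv_matrix x = u + axis (last_letter ?p1) (u $ last_letter ?p0)"
      by (simp_all add: fst_rv_step rv_winner_def rv_loser_def vector_mult_rv_matrix)
    with prefix_sums_before_move_row[OF r1 r0 l1 l0] agree show ?thesis
      by (simp add: prefix_sums_agree_def)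
  qed
  then show "prefix_sums_agree (fst x) (u v* rv_matrix x)"
    and "prefix_sum ?p0 (u v* rv_matrix x) = prefix_sum (fst (fst (rv_step x))) u"
    by blast+
qed

lemma prefix_sums_agree_rv_cocycle:
  assumes r0: "row_ok (fst ip)" and r1: "row_ok (snd ip)"
    and "prefix_sums_agree (fst (rv_iter ip v n)) u"
  shows "prefix_sums_agree ip (u v* rv_cocycle ip v n) \<and>
    prefix_sum (fst ip) (u v* rv_cocycle ip v n) = prefix_sum (fst (fst (rv_iter ip v n))) u"
  using assms(3)
proof (induction n arbitrary: u)
  case 0
  then show ?case by (simp add: rv_iter_def)
next
  case (Suc n)
  let ?x = "rv_iter ip v n"
  have step: "rv_iter ip v (Suc n) = rv_step ?x"
    by (simp add: rv_iter_def)
  have "row_ok (fst (fst ?x))" "row_ok (snd (fst ?x))"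
    using row_ok_rv_iter[OF r0 r1] by blast+
  note one = prefix_sums_agree_rv_step[OF this, of u]
  have "u v* rv_cocycle ip v (Suc n) = (u v* rv_matrix ?x) v* rv_cocycle ip v n"
    by (simp add: vector_matrix_mul_assoc)
  with Suc.IH[of "u v* rv_matrix ?x"] one Suc.prems step show ?case
    by simp
qed

lemma irreducible_perm_not_last_in_both_rows:
  assumes irr: "irreducible_perm (ip::'a::finite perm_datum)" and card: "CARD('a) \<ge> 2"
    and last0: "fst ip a = CARD('a)"
  shows "snd ip a < CARD('a)"
proof (rule ccontr)
  assume "\<not> snd ip a < CARD('a)"
  then have last1: "snd ip a = CARD('a)"
    using irr unfolding irreducible_perm_def row_ok_iff by (meson le_neq_implies_less)
  have all_but_a: "{b. p b \<le> CARD('a) - 1} = UNIV - {a}" if "row_ok p" "p a = CARD('a)"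
    for p :: "'a \<Rightarrow> nat"
    using that card row_ok_less_card[OF that] by fastforce
  have "CARD('a) - 1 \<in> {1..<CARD('a)}"
    using card by auto
  with irr have "{b. fst ip b \<le> CARD('a) - 1} \<noteq> {b. snd ip b \<le> CARD('a) - 1}"
    unfolding irreducible_perm_def by blast
  moreover have "row_ok (fst ip)" "row_ok (snd ip)"
    using irr irreducible_perm_def by blast+
  ultimately show False
    using all_but_a[of "fst ip"] all_but_a[of "snd ip"] last0 last1 by simp
qed

lemma abs_component_le_prefix_sums:
  assumes irr: "irreducible_perm (ip::'a::finite perm_datum)" and card: "CARD('a) \<ge> 2"
    and agree: "prefix_sums_agree ip x"
  shows "\<bar>x $ a\<bar> \<le> 2 * (\<Sum>b\<in>UNIV. \<bar>prefix_sum (fst ip) x b\<bar>)"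
proof -
  define N where "N = (\<Sum>b\<in>UNIV. \<bar>prefix_sum (fst ip) x b\<bar>)"
  have r0: "row_ok (fst ip)" and r1: "row_ok (snd ip)"
    using irr irreducible_perm_def by blast+
  have bound0: "\<bar>prefix_sum (fst ip) x b\<bar> \<le> N" for b
    unfolding N_def by (rule member_le_sum) auto
  then have bound1: "\<bar>prefix_sum (snd ip) x b\<bar> \<le> N" for b
    using agree unfolding prefix_sums_agree_def by metis
  have "\<exists>p\<in>{fst ip, snd ip}. row_ok p \<and> p a < CARD('a)"
  proof (cases "fst ip a < CARD('a)")
    case False
    then have "fst ip a = CARD('a)"
      using r0 unfolding row_ok_iff by (meson le_neq_implies_less)
    with irreducible_perm_not_last_in_both_rows[OF irr card] r1 show ?thesis by blast
  qed (use r0 in blast)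
  then obtain p where p: "p \<in> {fst ip, snd ip}" "row_ok p" and "p a < CARD('a)"
    by blast
  then obtain c where c: "p c = Suc (p a)"
    using row_ok_obtain_next by blast
  have bound: "\<bar>prefix_sum p x b\<bar> \<le> N" for b
    using p bound0 bound1 by auto
  have "inj p"
    using p(2) row_ok_iff by blast
  then have "\<bar>x $ a\<bar> \<le> \<bar>prefix_sum p x c\<bar> + \<bar>prefix_sum p x a\<bar>"
    using prefix_sum_next[OF _ c] by (simp add: abs_triangle_ineq4)
  with bound[of c] bound[of a] show ?thesis
    unfolding N_def[symmetric] by linarith
qed

lemma norm_vector_mult_rv_cocycle_le:
  assumes irr: "irreducible_perm (ip::'a::finite perm_datum)" and card: "CARD('a) \<ge> 2"
    and k: "k \<in> mat_kernel (Omega (fst (rv_iter ip v n)))"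
  shows "norm (k v* rv_cocycle ip v n) \<le> 2 * real CARD('a) ^ 3 * norm k"
proof -
  let ?lam = "k v* rv_cocycle ip v n"
  have r0: "row_ok (fst ip)" and r1: "row_ok (snd ip)"
    using irr irreducible_perm_def by blast+
  then have "prefix_sums_agree (fst (rv_iter ip v n)) k"
    using k mem_mat_kernel_Omega_iff row_ok_rv_iter by blast
  then have agree: "prefix_sums_agree ip ?lam"
    and same: "prefix_sum (fst ip) ?lam = prefix_sum (fst (fst (rv_iter ip v n))) k"
    using prefix_sums_agree_rv_cocycle[OF r0 r1] by blast+
  have "(\<Sum>b\<in>UNIV. \<bar>prefix_sum (fst ip) ?lam b\<bar>) \<le> (\<Sum>b\<in>(UNIV::'a set). real CARD('a) * norm k)"
    unfolding same by (rule sum_mono) (rule abs_prefix_sum_le)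
  then have "\<bar>?lam $ a\<bar> \<le> 2 * real CARD('a) ^ 2 * norm k" for a
    using abs_component_le_prefix_sums[OF irr card agree, of a] by (simp add: power2_eq_square)
  then have "(\<Sum>a\<in>UNIV. \<bar>?lam $ a\<bar>) \<le> (\<Sum>a\<in>(UNIV::'a set). 2 * real CARD('a) ^ 2 * norm k)"
    by (rule sum_mono)
  with norm_le_l1_cart[of ?lam] show ?thesis
    by (simp add: power_numeral_reduce)
qed

lemma vector_mult_rv_cocycle_return:
  assumes irr: "irreducible_perm (ip::'a::finite perm_datum)" and card: "CARD('a) \<ge> 2"
    and return: "fst (rv_iter ip v n) = ip" and k: "k \<in> mat_kernel (Omega ip)"
  shows "k v* rv_cocycle ip v n = k"
proof -
  define d where "d = k v* rv_cocycle ip v n - k"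
  have r0: "row_ok (fst ip)" and r1: "row_ok (snd ip)"
    using irr irreducible_perm_def by blast+
  have agree_k: "prefix_sums_agree ip k"
    using k mem_mat_kernel_Omega_iff[OF r0 r1] by blast
  then have "prefix_sums_agree ip (k v* rv_cocycle ip v n)"
    and same: "prefix_sum (fst ip) (k v* rv_cocycle ip v n) = prefix_sum (fst ip) k"
    using prefix_sums_agree_rv_cocycle[OF r0 r1, of v n k] return by auto
  with agree_k have "prefix_sums_agree ip d"
    by (simp add: prefix_sums_agree_def d_def fun_eq_iff prefix_sum_diff)
  moreover have "prefix_sum (fst ip) d b = 0" for b
    using same by (simp add: d_def prefix_sum_diff)
  ultimately have "\<bar>d $ a\<bar> \<le> 0" for a
    using abs_component_le_prefix_sums[OF irr card] by fastforce
  then have "d = 0"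
    by (simp add: vec_eq_iff)
  then show ?thesis
    by (simp add: d_def)
qed

lemma subspace_mat_kernel: "subspace (mat_kernel (M::real^'a::finite^'a))"
  unfolding mat_kernel_def subspace_def
  by (simp add: matrix_vector_right_distrib matrix_vector_mult_scaleR)

lemma orth_proj_eqI:
  assumes W: "subspace W" and y: "y \<in> W" and orth: "\<forall>w\<in>W. (x - y) \<bullet> w = 0"
  shows "orth_proj W x = y"
  unfolding orth_proj_def
proof (rule the_equality)
  show "y \<in> W \<and> (\<forall>w\<in>W. (x - y) \<bullet> w = 0)"
    using y orth by blast
next
  fix y' assume y': "y' \<in> W \<and> (\<forall>w\<in>W. (x - y') \<bullet> w = 0)"
  then have "y - y' \<in> W"
    using W y subspace_diff by blast
  then have "(x - y') \<bullet> (y - y') - (x - y) \<bullet> (y - y') = 0"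
    using orth y' by simp
  then have "(y - y') \<bullet> (y - y') = 0"
    by (simp add: inner_diff_left)
  then show "y' = y" by simp
qed

lemma orth_proj:
  assumes W: "subspace (W::(real^'a::finite) set)"
  shows "orth_proj W x \<in> W" and "\<forall>w\<in>W. (x - orth_proj W x) \<bullet> w = 0"
proof -
  obtain y z where "y \<in> span W" and z: "\<And>w. w \<in> span W \<Longrightarrow> orthogonal z w" and "x = y + z"
    using orthogonal_subspace_decomp_exists[of W x] by blast
  moreover have "span W = W"
    using W by (simp add: span_eq_iff)
  ultimately have "y \<in> W" and orth: "\<forall>w\<in>W. (x - y) \<bullet> w = 0"
    by (auto simp: orthogonal_def)
  with orth_proj_eqI[OF W] show "orth_proj W x \<in> W" and "\<forall>w\<in>W. (x - orth_proj W x) \<bullet> w = 0"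
    by simp_all
qed

lemma inner_matrix_vector_mult: "(Z *v x) \<bullet> k = x \<bullet> (k v* (Z::real^'n^'m))"
  using dot_lmul_matrix[of k Z x] by (simp add: inner_commute)

lemma norm_orth_proj_matrix_vector_mult_le:
  assumes W: "subspace (W::(real^'a::finite) set)" and "0 \<le> C"
    and bound: "\<And>k. k \<in> W \<Longrightarrow> norm (k v* Z) \<le> C * norm k"
  shows "norm (orth_proj W (Z *v x)) \<le> C * norm x"
proof -
  define k where "k = orth_proj W (Z *v x)"
  have "k \<in> W" and "\<forall>w\<in>W. (Z *v x - k) \<bullet> w = 0"
    using orth_proj[OF W] unfolding k_def by blast+
  then have "norm k ^ 2 = (Z *v x) \<bullet> k"
    by (simp add: power2_norm_eq_inner inner_diff_left)
  also have "\<dots> = x \<bullet> (k v* Z)"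
    by (rule inner_matrix_vector_mult)
  also have "\<dots> \<le> norm x * norm (k v* Z)"
    by (rule norm_cauchy_schwarz)
  also have "\<dots> \<le> norm x * (C * norm k)"
    using bound[OF \<open>k \<in> W\<close>] by (rule mult_left_mono) simp
  finally have "norm k * norm k \<le> (C * norm x) * norm k"
    by (simp add: power2_eq_square algebra_simps)
  then show ?thesis
    using \<open>0 \<le> C\<close> unfolding k_def[symmetric]
    by (cases "norm k = 0") (simp_all add: mult_le_cancel_right)
qed

lemma orth_proj_matrix_vector_mult_eq:
  assumes W: "subspace (W::(real^'a::finite) set)" and invariant: "\<And>k. k \<in> W \<Longrightarrow> k v* Z = k"
  shows "orth_proj W (Z *v x) = orth_proj W x"
proof (rule orth_proj_eqI[OF W])
  show "orth_proj W x \<in> W"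
    using orth_proj(1)[OF W] .
  show "\<forall>w\<in>W. (Z *v x - orth_proj W x) \<bullet> w = 0"
    using orth_proj(2)[OF W, of x] invariant by (simp add: inner_diff_left inner_matrix_vector_mult)
qed

theorem lemma6p3:
  assumes "CARD('a::finite) \<ge> 2"
  shows "\<exists>C>0. \<forall>ip :: 'a perm_datum. irreducible_perm ip \<longrightarrow>
    (AE v in lborel. (\<forall>a. v $ a > 0) \<longrightarrow>
       (\<forall>n. onorm (\<lambda>x. orth_proj (mat_kernel (Omega (fst (zorich_iter ip v n))))
                              (zorich_cocycle ip v n *v x)) \<le> C) \<and>
       (\<forall>n. fst (zorich_iter ip v n) = ip \<longrightarrow>
          (\<forall>x. orth_proj (mat_kernel (Omega ip)) (zorich_cocycle ip v n *v x)
               = orth_proj (mat_kernel (Omega ip)) x)))"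
proof (intro exI[of _ "2 * real CARD('a) ^ 3"] conjI allI impI AE_I2)
  show "0 < 2 * real CARD('a) ^ 3"
    by simp
  fix ip :: "'a perm_datum" and v :: "real^'a" and n
  assume irr: "irreducible_perm ip"
  show "onorm (\<lambda>x. orth_proj (mat_kernel (Omega (fst (zorich_iter ip v n))))
                     (zorich_cocycle ip v n *v x)) \<le> 2 * real CARD('a) ^ 3"
    unfolding zorich_iter_def zorich_cocycle_def
    using norm_orth_proj_matrix_vector_mult_le[OF subspace_mat_kernel _
        norm_vector_mult_rv_cocycle_le[OF irr assms]]
    by (intro onorm_le) simp
  show "orth_proj (mat_kernel (Omega ip)) (zorich_cocycle ip v n *v x)
      = orth_proj (mat_kernel (Omega ip)) x"
    if "fst (zorich_iter ip v n) = ip" for x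
    using that unfolding zorich_iter_def zorich_cocycle_def
    by (intro orth_proj_matrix_vector_mult_eq subspace_mat_kernel
        vector_mult_rv_cocycle_return[OF irr assms])
qed

end
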